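(* For every $d$-dimensional state $\rho$ and every maximally coherent state $|\Psi_d\rangle=d^{-1/2}\sum_{j=1}^de^{i\theta_j}|j\rangle$ ($\theta_j\in\mathbb R$), \[ \mu_d(\rho)\ge\log d+\log\langle\Psi_d|\rho|\Psi_d\rangle . \]
   Context: Fixed computational basis; $\Delta$ the dephasing map (deleting off-diagonal entries); logs base 2. $R^\rho=\Delta(\rho)^{-1/2}\rho\Delta(\rho)^{-1/2}$ (inverse on the support) and $\mu_k(\rho)=\max_{I\subseteq[d],|I|\le k}\log\|\Pi_IR^\rho\Pi_I\|_\infty$ with $\Pi_I=\sum_{i\in I}|i\rangle\langle i|$; in particular $\mu_d(\rho)=\log\|R^\rho\|_\infty$. *)

theory Defs
  imports "HOL-Analysis.Analysis"
begin

text \<open>States on C^d are d x d complex matrices indexed by a finite type 'n, d = CARD('n).\<close>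

definition cinner_vec :: "complex ^ 'n \<Rightarrow> complex ^ 'n \<Rightarrow> complex" where
  "cinner_vec x y = (\<Sum>i\<in>UNIV. cnj (x $ i) * y $ i)"

definition psd :: "complex ^ 'n ^ 'n \<Rightarrow> bool" where
  "psd A \<longleftrightarrow> (\<forall>x. Im (cinner_vec x (A *v x)) = 0 \<and> Re (cinner_vec x (A *v x)) \<ge> 0)"

definition density :: "complex ^ 'n ^ 'n \<Rightarrow> bool" where
  "density \<rho> \<longleftrightarrow> psd \<rho> \<and> (\<Sum>i\<in>UNIV. \<rho> $ i $ i) = 1"

definition dephase :: "complex ^ 'n ^ 'n \<Rightarrow> complex ^ 'n ^ 'n" where
  "dephase \<rho> = (\<chi> i j. if i = j then \<rho> $ i $ j else 0)"

text \<open>Delta(rho)^(-1/2), inverse taken on the support.\<close>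
definition dephase_inv_sqrt :: "complex ^ 'n ^ 'n \<Rightarrow> complex ^ 'n ^ 'n" where
  "dephase_inv_sqrt \<rho> = (\<chi> i j. if i = j \<and> Re (dephase \<rho> $ i $ i) > 0
        then complex_of_real (1 / sqrt (Re (dephase \<rho> $ i $ i))) else 0)"

definition Rmat :: "complex ^ 'n ^ 'n \<Rightarrow> complex ^ 'n ^ 'n" where
  "Rmat \<rho> = dephase_inv_sqrt \<rho> ** \<rho> ** dephase_inv_sqrt \<rho>"

definition opnorm :: "complex ^ 'n ^ 'n \<Rightarrow> real" where
  "opnorm A = onorm (\<lambda>x. A *v x)"

definition proj :: "'n set \<Rightarrow> complex ^ 'n ^ 'n" where
  "proj I = (\<chi> i j. if i = j \<and> i \<in> I then 1 else 0)"

text \<open>mu_k; the empty index set (value log 0 = -infinity) is omitted since it never attains the max.\<close>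
definition mu :: "nat \<Rightarrow> complex ^ 'n ^ 'n \<Rightarrow> real" where
  "mu k \<rho> = Max {log 2 (opnorm (proj I ** Rmat \<rho> ** proj I)) | I. I \<noteq> {} \<and> card I \<le> k}"

definition max_coherent :: "('n \<Rightarrow> real) \<Rightarrow> complex ^ 'n" where
  "max_coherent \<theta> = (\<chi> j. exp (\<i> * complex_of_real (\<theta> j)) / complex_of_real (sqrt (real CARD('n))))"

end

theory Submission
  imports Defs
begin

text \<open>Put \<open>y = \<Delta>(\<rho>)\<^sup>1\<^sup>/\<^sup>2 \<Psi>\<close>. On the support of \<open>\<Delta>(\<rho>)\<close> the square root cancels against
  \<open>\<Delta>(\<rho>)\<^sup>-\<^sup>1\<^sup>/\<^sup>2\<close>, and off the support the corresponding rows and columns of the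
  positive semidefinite \<open>\<rho>\<close> vanish; hence \<open>\<langle>y|R\<^sup>\<rho>|y\<rangle> = \<langle>\<Psi>|\<rho>|\<Psi>\<rangle>\<close>. As \<open>|\<Psi>\<^sub>j|\<^sup>2 = 1/d\<close>
  and \<open>tr \<rho> = 1\<close>, \<open>\<parallel>y\<parallel>\<^sup>2 = 1/d\<close>, so Cauchy-Schwarz gives \<open>\<langle>\<Psi>|\<rho>|\<Psi>\<rangle> \<le> \<parallel>R\<^sup>\<rho>\<parallel>\<^sub>\<infinity> / d\<close>.\<close>

lemma cinner_vec_add_left: "cinner_vec (x + y) z = cinner_vec x z + cinner_vec y z"
  by (simp add: cinner_vec_def sum.distrib distrib_right)

lemma cinner_vec_add_right: "cinner_vec x (y + z) = cinner_vec x y + cinner_vec x z"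
  by (simp add: cinner_vec_def sum.distrib distrib_left)

lemma Re_cinner_vec: "Re (cinner_vec x y) = inner x y"
  by (simp add: cinner_vec_def inner_vec_def Re_sum inner_complex_def)

lemma cinner_vec_matrix_vector_mult:
  "cinner_vec x (A *v y) = (\<Sum>k\<in>UNIV. \<Sum>l\<in>UNIV. cnj (x $ k) * A $ k $ l * y $ l)"
  by (simp add: cinner_vec_def matrix_vector_mult_def sum_distrib_left mult.assoc)

lemma cinner_vec_axis_matrix_axis:
  "cinner_vec (axis i s) (A *v axis j t) = cnj s * A $ i $ j * t"
  by (simp add: cinner_vec_matrix_vector_mult axis_def if_distrib[of cnj]
      if_distrib[of "\<lambda>x. x * _"] if_distrib[of "\<lambda>x. _ * x"] cong: if_cong)

lemma psd_diag:
  assumes "psd A"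
  shows "Im (A $ i $ i) = 0" and "Re (A $ i $ i) \<ge> 0"
  using assms cinner_vec_axis_matrix_axis[of i 1 A i 1] unfolding psd_def
  by (metis mult_1 mult_1_right complex_cnj_one)+

lemma affine_nonneg_imp_slope_eq_0:
  fixes m c :: real
  assumes "\<And>s. s * m + c \<ge> 0"
  shows "m = 0"
proof (rule ccontr)
  assume "m \<noteq> 0"
  have "c \<ge> 0" using assms[of 0] by simp
  moreover have "(- (c + 1) / m) * m + c \<ge> 0" using assms by blast
  ultimately show False using \<open>m \<noteq> 0\<close> by simp
qed

lemma psd_diag_eq_0_imp_row_col_eq_0:
  assumes "psd A" and "A $ i $ i = 0"
  shows "A $ i $ j = 0" and "A $ j $ i = 0"
proof -
  let ?a = "A $ i $ j" and ?b = "A $ j $ i" and ?c = "A $ j $ j"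
  have form: "Im (cnj t * ?a + ?b * t + ?c) = 0 \<and> Re (cnj t * ?a + ?b * t + ?c) \<ge> 0" for t
  proof -
    let ?x = "axis i t + axis j 1"
    have "cinner_vec ?x (A *v ?x) = cnj t * ?a + ?b * t + ?c"
      by (simp add: matrix_vector_right_distrib cinner_vec_add_left cinner_vec_add_right
          cinner_vec_axis_matrix_axis assms(2))
    then show ?thesis using assms(1) unfolding psd_def by metis
  qed
  have "Re ?a + Re ?b = 0"
    by (rule affine_nonneg_imp_slope_eq_0[of _ "Re ?c"])
      (use form[of "of_real s" for s] in \<open>simp add: distrib_left mult.commute\<close>)
  moreover have "Im ?a - Im ?b = 0"
    by (rule affine_nonneg_imp_slope_eq_0[of _ "Re ?c"])
      (use form[of "\<i> * of_real s" for s] in \<open>simp add: right_diff_distrib mult.commute\<close>)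
  moreover have "Im ?a + Im ?b = 0" "Re ?b - Re ?a = 0"
    using form[of 0] form[of 1] form[of \<i>] by simp_all
  ultimately show "?a = 0" "?b = 0" by (simp_all add: complex_eq_iff)
qed

lemma diag_matrix_mult_matrix_mult_diag_nth:
  fixes D A :: "'a::comm_semiring_1 ^ 'n ^ 'n"
  assumes "\<And>a b. a \<noteq> b \<Longrightarrow> D $ a $ b = 0"
  shows "(D ** A ** D) $ i $ j = D $ i $ i * A $ i $ j * D $ j $ j"
proof -
  have row: "(\<Sum>k\<in>UNIV. D $ a $ k * f k) = D $ a $ a * f a" for a f
    by (subst sum.remove[of UNIV a]) (auto intro!: sum.neutral simp: assms)
  have col: "(\<Sum>k\<in>UNIV. f k * D $ k $ b) = f b * D $ b $ b" for b f
    by (subst sum.remove[of UNIV b]) (auto intro!: sum.neutral simp: assms)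
  show ?thesis
    by (simp add: matrix_matrix_mult_def row col)
qed

lemma Rmat_nth:
  "Rmat \<rho> $ i $ j = dephase_inv_sqrt \<rho> $ i $ i * \<rho> $ i $ j * dephase_inv_sqrt \<rho> $ j $ j"
  unfolding Rmat_def by (rule diag_matrix_mult_matrix_mult_diag_nth) (simp add: dephase_inv_sqrt_def)

lemma dephase_inv_sqrt_mult_sqrt:
  "dephase_inv_sqrt \<rho> $ i $ i * of_real (sqrt (Re (\<rho> $ i $ i)))
     = (if Re (\<rho> $ i $ i) > 0 then 1 else 0)"
  by (simp add: dephase_inv_sqrt_def dephase_def)

definition dephase_sqrt_vec :: "complex ^ 'n ^ 'n \<Rightarrow> complex ^ 'n \<Rightarrow> complex ^ 'n" where
  "dephase_sqrt_vec \<rho> x = (\<chi> i. of_real (sqrt (Re (\<rho> $ i $ i))) * x $ i)"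

lemma cinner_vec_Rmat_dephase_sqrt_vec:
  assumes "psd \<rho>"
  shows "cinner_vec (dephase_sqrt_vec \<rho> x) (Rmat \<rho> *v dephase_sqrt_vec \<rho> x) = cinner_vec x (\<rho> *v x)"
proof -
  let ?y = "dephase_sqrt_vec \<rho> x"
  have vanish: "\<rho> $ k $ l = 0" if "\<not> Re (\<rho> $ k $ k) > 0 \<or> \<not> Re (\<rho> $ l $ l) > 0" for k l
  proof -
    have "\<rho> $ m $ m = 0" if "\<not> Re (\<rho> $ m $ m) > 0" for m
      using psd_diag[OF assms, of m] that by (simp add: complex_eq_iff)
    then show ?thesis
      using that psd_diag_eq_0_imp_row_col_eq_0[OF assms] by blast
  qed
  have "cnj (?y $ k) * Rmat \<rho> $ k $ l * ?y $ l = cnj (x $ k) * \<rho> $ k $ l * x $ l" for k l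
  proof -
    have "cnj (?y $ k) * Rmat \<rho> $ k $ l * ?y $ l
      = cnj (x $ k) * ((dephase_inv_sqrt \<rho> $ k $ k * of_real (sqrt (Re (\<rho> $ k $ k))))
          * \<rho> $ k $ l * (dephase_inv_sqrt \<rho> $ l $ l * of_real (sqrt (Re (\<rho> $ l $ l))))) * x $ l"
      by (simp add: dephase_sqrt_vec_def Rmat_nth algebra_simps)
    then show ?thesis
      unfolding dephase_inv_sqrt_mult_sqrt using vanish[of k l] by auto
  qed
  then show ?thesis
    unfolding cinner_vec_matrix_vector_mult by simp
qed

lemma norm_dephase_sqrt_vec_squared:
  assumes "psd \<rho>"
  shows "(norm (dephase_sqrt_vec \<rho> x))\<^sup>2 = (\<Sum>i\<in>UNIV. Re (\<rho> $ i $ i) * (cmod (x $ i))\<^sup>2)"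
  unfolding power2_norm_eq_inner inner_vec_def
  by (simp add: dephase_sqrt_vec_def power2_norm_eq_inner[symmetric] norm_mult power_mult_distrib
      psd_diag[OF assms])

lemma norm_max_coherent_nth:
  fixes \<theta> :: "'n::finite \<Rightarrow> real"
  shows "cmod (max_coherent \<theta> $ i) = 1 / sqrt CARD('n)"
  by (simp add: max_coherent_def norm_divide norm_exp_i_times)

lemma Re_cinner_vec_le_opnorm: "Re (cinner_vec y (A *v y)) \<le> opnorm A * (norm y)\<^sup>2"
proof -
  have "Re (cinner_vec y (A *v y)) \<le> norm y * norm (A *v y)"
    unfolding Re_cinner_vec by (rule norm_cauchy_schwarz)
  also have "\<dots> \<le> norm y * (opnorm A * norm y)"
    unfolding opnorm_def by (rule mult_left_mono) (simp_all add: onorm)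
  finally show ?thesis by (simp add: power2_eq_square mult_ac)
qed

lemma log_opnorm_compress_le_mu:
  assumes "I \<noteq> {}" and "card I \<le> k"
  shows "log 2 (opnorm (proj I ** Rmat \<rho> ** proj I)) \<le> mu k \<rho>"
  unfolding mu_def by (rule Max_ge) (use assms in auto)

lemma proj_UNIV: "proj UNIV = mat 1"
  by (simp add: proj_def mat_def)

theorem lemma4:
  fixes \<rho> :: "complex ^ 'n ^ 'n" and \<theta> :: "'n \<Rightarrow> real"
  assumes "density \<rho>"
    and "Re (cinner_vec (max_coherent \<theta>) (\<rho> *v max_coherent \<theta>)) > 0"
  shows "mu CARD('n) \<rho> \<ge> log 2 (real CARD('n))
           + log 2 (Re (cinner_vec (max_coherent \<theta>) (\<rho> *v max_coherent \<theta>)))"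
proof -
  define d where "d = real CARD('n)"
  define q where "q = Re (cinner_vec (max_coherent \<theta>) (\<rho> *v max_coherent \<theta>))"
  define y where "y = dephase_sqrt_vec \<rho> (max_coherent \<theta>)"
  have psd: "psd \<rho>" and trace: "(\<Sum>i\<in>UNIV. Re (\<rho> $ i $ i)) = 1"
    using assms(1) unfolding density_def by (auto simp flip: Re_sum)
  have "(norm y)\<^sup>2 = (\<Sum>i\<in>UNIV. Re (\<rho> $ i $ i)) / d"
    by (simp add: y_def d_def norm_dephase_sqrt_vec_squared[OF psd] norm_max_coherent_nth
        power_divide sum_divide_distrib real_sqrt_pow2)
  then have "q \<le> opnorm (Rmat \<rho>) / d"
    using Re_cinner_vec_le_opnorm[of y "Rmat \<rho>"] trace
    by (simp add: q_def y_def cinner_vec_Rmat_dephase_sqrt_vec[OF psd])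
  then have le: "d * q \<le> opnorm (Rmat \<rho>)"
    by (simp add: d_def field_simps)
  have "d > 0" and "q > 0"
    using assms(2) by (simp_all add: d_def q_def)
  then have "log 2 d + log 2 q = log 2 (d * q)"
    by (simp add: log_mult_pos)
  also have "\<dots> \<le> log 2 (opnorm (Rmat \<rho>))"
    using le mult_pos_pos[OF \<open>d > 0\<close> \<open>q > 0\<close>] by (subst log_le_cancel_iff) auto
  also have "\<dots> \<le> mu CARD('n) \<rho>"
    using log_opnorm_compress_le_mu[of UNIV "CARD('n)" \<rho>] by (simp add: proj_UNIV)
  finally show ?thesis unfolding d_def q_def .
qed

end
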